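(* Let $E$ be a congruence on $\overline{\boldsymbol{T}(X_1,\ldots,X_n)}$. If $\overline{\boldsymbol{T}(X_1,\ldots,X_n)}/E$ is not a semifield over $\boldsymbol{T}$, then $\boldsymbol{V}(E)=\varnothing$.
   Context: $\boldsymbol{T}=\mathbb{R}\cup\{-\infty\}$ with $a\oplus b=\max\{a,b\}$, $a\odot b=a+b$. $\overline{\boldsymbol{T}(X_1,\ldots,X_n)}$ is the semifield of fractions of the tropical polynomial function semiring (tropical polynomials modulo equality as functions $\boldsymbol{T}^n\to\boldsymbol{T}$); each element defines a function $\mathbb{R}^n\to\boldsymbol{T}$. A congruence is an equivalence relation compatible with both operations; $\boldsymbol{V}(E)=\{x\in\mathbb{R}^n\mid f(x)=g(x)\ \forall(f,g)\in E\}$. A semifield is a commutative semiring with $0\ne1$ whose nonzero elements are invertible; a semifield $S_2$ is a semifield over the semifield $S_1$ via a semiring homomorphism $S_1\to S_2$ if this homomorphism is injective; here the homomorphism is $\boldsymbol{T}\to\overline{\boldsymbol{T}(X_1,\ldots,X_n)}/E$ sending a constant to its class. *)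

theory Defs
  imports "HOL-Analysis.Analysis"
begin

text \<open>The tropical semifield T = R with -infinity is modelled inside ereal
  (the value +infinity never occurs).
  Elements of the semifield of fractions of tropical polynomial functions are
  represented by the functions R^n -> T they define.\<close>

type_synonym 'n tfun = "real^'n \<Rightarrow> ereal"

definition tmono_val :: "real \<times> ('n::finite \<Rightarrow> nat) \<Rightarrow> real^'n \<Rightarrow> real" where
  "tmono_val m x = fst m + (\<Sum>i\<in>UNIV. real (snd m i) * x $ i)"

text \<open>Tropical polynomial function with a finite nonempty set of monomials with
  finite coefficients (i.e. a nonzero tropical polynomial), evaluated on R^n.\<close>
definition tpoly_val :: "(real \<times> ('n::finite \<Rightarrow> nat)) set \<Rightarrow> real^'n \<Rightarrow> real" where
  "tpoly_val P x = Max ((\<lambda>m. tmono_val m x) ` P)"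

definition tfrac :: "'n::finite tfun set" where
  "tfrac = {\<lambda>x. -\<infinity>} \<union>
     {h. \<exists>P Q. finite P \<and> P \<noteq> {} \<and> finite Q \<and> Q \<noteq> {} \<and>
              h = (\<lambda>x. ereal (tpoly_val P x - tpoly_val Q x))}"

definition tadd :: "'n tfun \<Rightarrow> 'n tfun \<Rightarrow> 'n tfun" where
  "tadd f g = (\<lambda>x. max (f x) (g x))"

definition tmul :: "'n tfun \<Rightarrow> 'n tfun \<Rightarrow> 'n tfun" where
  "tmul f g = (\<lambda>x. f x + g x)"

definition tconst :: "ereal \<Rightarrow> 'n tfun" where
  "tconst c = (\<lambda>x. c)"

definition tcongruence :: "('n::finite tfun \<times> 'n tfun) set \<Rightarrow> bool" where
  "tcongruence E \<longleftrightarrow> equiv tfrac E \<and>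
     (\<forall>f g f' g'. (f, g) \<in> E \<longrightarrow> (f', g') \<in> E \<longrightarrow>
        (tadd f f', tadd g g') \<in> E \<and> (tmul f f', tmul g g') \<in> E)"

text \<open>The quotient semifield / E is a semifield over T: it is a semifield
  (0 <> 1 and nonzero classes are invertible; commutative semiring structure is
  inherited from the congruence), and the map T -> quotient, c |-> class of the
  constant c, is injective.\<close>
definition semifield_over_T :: "('n::finite tfun \<times> 'n tfun) set \<Rightarrow> bool" where
  "semifield_over_T E \<longleftrightarrow>
     E `` {tconst (-\<infinity>)} \<noteq> E `` {tconst 0} \<and>
     (\<forall>f\<in>tfrac. E `` {f} \<noteq> E `` {tconst (-\<infinity>)} \<longrightarrow>
        (\<exists>g\<in>tfrac. E `` {tmul f g} = E `` {tconst 0})) \<and>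
     inj_on (\<lambda>c. E `` {tconst c}) {c. c \<noteq> \<infinity>}"

definition tV :: "('n::finite tfun \<times> 'n tfun) set \<Rightarrow> (real^'n) set" where
  "tV E = {x. \<forall>(f, g)\<in>E. f x = g x}"

end

theory Submission
  imports Defs
begin

text \<open>Every nonzero element of the semifield of fractions is invertible, whatever the
  congruence; so the only way the quotient can fail to be a semifield over T is that
  the classes of the constants collapse. A point x of V(E) rules this out: related
  functions agree at x, and the constant c takes the value c there.\<close>

lemma tfrac_quotientI:
  assumes "finite P" "P \<noteq> {}" "finite Q" "Q \<noteq> {}"
  shows "(\<lambda>x. ereal (tpoly_val P x - tpoly_val Q x)) \<in> tfrac"
  using assms unfolding tfrac_def by blast

lemma tpoly_val_constant: "tpoly_val {(r, \<lambda>i. 0)} x = r"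
  by (simp add: tpoly_val_def tmono_val_def)

lemma tconst_in_tfrac:
  assumes "c \<noteq> \<infinity>"
  shows "(tconst c :: 'n::finite tfun) \<in> tfrac"
proof (cases c)
  case (real r)
  have "tconst c = (\<lambda>x::real^'n. ereal (tpoly_val {(r, \<lambda>i. 0)} x - tpoly_val {(0, \<lambda>i. 0)} x))"
    by (simp add: tpoly_val_constant tconst_def real)
  also have "\<dots> \<in> tfrac"
    by (rule tfrac_quotientI) auto
  finally show ?thesis .
next
  case MInf
  then show ?thesis unfolding tfrac_def tconst_def by simp
qed (use assms in simp)

lemma tfrac_inverse:
  assumes "f \<in> tfrac" "f \<noteq> tconst (-\<infinity>)"
  shows "\<exists>g\<in>tfrac. tmul f g = tconst 0"
proof -
  obtain P Q where PQ: "finite P" "P \<noteq> {}" "finite Q" "Q \<noteq> {}"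
    and f: "f = (\<lambda>x. ereal (tpoly_val P x - tpoly_val Q x))"
    using assms unfolding tfrac_def tconst_def by blast
  let ?g = "\<lambda>x. ereal (tpoly_val Q x - tpoly_val P x)"
  have "?g \<in> tfrac"
    using PQ by (intro tfrac_quotientI)
  moreover have "tmul f ?g = tconst 0"
    unfolding tmul_def tconst_def f by (simp add: zero_ereal_def)
  ultimately show ?thesis by blast
qed

lemma tV_related_eq:
  assumes "x \<in> tV E" "(f, g) \<in> E"
  shows "f x = g x"
  using assms unfolding tV_def by blast

lemma inj_on_tconst_class_if_tV_nonempty:
  assumes "equiv tfrac E" "x \<in> tV E"
  shows "inj_on (\<lambda>c. E `` {tconst c}) {c. c \<noteq> \<infinity>}"
proof (rule inj_onI)
  fix c d :: ereal
  assume "c \<in> {c. c \<noteq> \<infinity>}" and classes: "E `` {tconst c} = E `` {tconst d}"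
  then have "tconst c \<in> tfrac"
    by (simp add: tconst_in_tfrac)
  then have "tconst c \<in> E `` {tconst c}"
    by (rule equiv_class_self[OF assms(1)])
  then have "(tconst d, tconst c) \<in> E"
    using classes by simp
  then have "tconst d x = tconst c x"
    by (rule tV_related_eq[OF assms(2)])
  then show "c = d"
    by (simp add: tconst_def)
qed

lemma semifield_over_T_if_tV_nonempty:
  assumes "equiv tfrac E" "x \<in> tV E"
  shows "semifield_over_T E"
proof -
  have inj: "inj_on (\<lambda>c. E `` {tconst c}) {c. c \<noteq> \<infinity>}"
    using assms by (rule inj_on_tconst_class_if_tV_nonempty)
  have "E `` {tconst (-\<infinity>)} \<noteq> E `` {tconst 0}"
  proof
    assume classes: "E `` {tconst (-\<infinity>)} = E `` {tconst 0}"
    have "(-\<infinity>) = (0::ereal)"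
      by (rule inj_onD[OF inj]) (use classes in simp_all)
    then show False by simp
  qed
  moreover have "\<exists>g\<in>tfrac. E `` {tmul f g} = E `` {tconst 0}"
    if f: "f \<in> tfrac" and nonzero: "E `` {f} \<noteq> E `` {tconst (-\<infinity>)}" for f
  proof -
    have "f \<noteq> tconst (-\<infinity>)"
      using nonzero by auto
    then obtain g where "g \<in> tfrac" "tmul f g = tconst 0"
      using tfrac_inverse[OF f] by blast
    then show ?thesis
      by (intro bexI[of _ g]) simp_all
  qed
  ultimately show ?thesis
    using inj unfolding semifield_over_T_def by blast
qed

theorem lemma3p7:
  fixes E :: "('n::finite tfun \<times> 'n tfun) set"
  assumes "tcongruence E"
    and "\<not> semifield_over_T E"
  shows "tV E = {}"
proof -
  have "equiv tfrac E"
    using assms(1) unfolding tcongruence_def by simp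
  then show ?thesis
    using assms(2) semifield_over_T_if_tV_nonempty by blast
qed

end
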